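(* Let $n\ge1$ have binary expansion $n=\sum_{j=1}^{\ell}2^{m_j}$ with $\ell\ge1$ and integers $m_1>m_2>\cdots>m_\ell\ge0$. Then $$c_n=\sum_{j=2}^{\ell}2^{m_j}\bigl(m_1-m_j-2(j-2)\bigr).$$
   Context: Bifurcating trees: rooted trees in which every internal node has exactly two children; $\mathcal{T}_n$ is the set of isomorphism classes of bifurcating trees with $n$ leaves. For a node $w$, $\kappa_T(w)$ is its number of descendant leaves. The Colless index is $\mathcal{C}(T)=\sum_{v}|\kappa_T(v_1)-\kappa_T(v_2)|$, summed over internal nodes $v$ with children $v_1,v_2$; $c_n=\min\{\mathcal{C}(T):T\in\mathcal{T}_n\}$. *)

theory Defs
  imports Main
begin

text \<open>The datatype distinguishes left/right children; isomorphism classes are the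
  quotient under swapping children, which leaves both leaf count and Colless
  index unchanged, so the minimum below equals the minimum over T_n.\<close>
datatype btree = Leaf | Node btree btree

fun leaves :: "btree \<Rightarrow> nat" where
  "leaves Leaf = 1"
| "leaves (Node l r) = leaves l + leaves r"

fun colless :: "btree \<Rightarrow> nat" where
  "colless Leaf = 0"
| "colless (Node l r) = colless l + colless r + (if leaves l \<ge> leaves r then leaves l - leaves r else leaves r - leaves l)"

definition min_colless :: "nat \<Rightarrow> nat" where
  "min_colless n = Min {colless t | t. leaves t = n}"

end

theory Submission
  imports Defs
begin

text \<open>The minimum is attained by the maximally balanced tree, which splits n leaves into
  \<lceil>n/2\<rceil> and \<lfloor>n/2\<rfloor> at every node; its Colless index b(n) satisfies
  b(2n) = 2b(n) and b(2n+1) = b(n) + b(n+1) + 1. By induction on a + b and a parity case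
  split, b(a + b) \<le> b(a) + b(b) + |a - b|, so the root split of any tree is no better than
  the balanced one and c(n) = b(n).
  For the closed form, doubling shows that raising the leading bit of 2^m + r (with r \<le> 2^m)
  adds r, while b(2^(t+1) + r) = b(r) - r + 2^(t+1) for 2^t \<le> r \<le> 2^(t+1). Together,
  peeling off the leading bit m_1 of n adds (m_1 - m_2 - 2)r + 2^(m_2+1), where r is the
  remainder, and the stated sum follows by induction on the binary expansion.\<close>

fun balanced_colless :: "nat \<Rightarrow> nat" where
  "balanced_colless 0 = 0"
| "balanced_colless (Suc 0) = 0"
| "balanced_colless n = balanced_colless (n div 2) + balanced_colless (n - n div 2) + n mod 2"

lemma balanced_colless_step:
  "n \<ge> 2 \<Longrightarrow> balanced_colless n = balanced_colless (n div 2) + balanced_colless (n - n div 2) + n mod 2"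
  by (cases n rule: balanced_colless.cases) auto

declare balanced_colless.simps(3) [simp del]

lemma balanced_colless_double: "balanced_colless (2 * n) = 2 * balanced_colless n"
  by (cases "n = 0") (simp_all add: balanced_colless_step)

lemma balanced_colless_Suc_double:
  "balanced_colless (Suc (2 * n)) = balanced_colless n + balanced_colless (Suc n) + (if n = 0 then 0 else 1)"
  by (cases "n = 0") (simp_all add: balanced_colless_step)

lemma balanced_colless_power_two [simp]: "balanced_colless (2 ^ m) = 0"
  by (induction m) (simp_all add: balanced_colless_double)

fun balanced_tree :: "nat \<Rightarrow> btree" where
  "balanced_tree 0 = Leaf"
| "balanced_tree (Suc 0) = Leaf"
| "balanced_tree n = Node (balanced_tree (n - n div 2)) (balanced_tree (n div 2))"

lemma balanced_tree_step:
  "n \<ge> 2 \<Longrightarrow> balanced_tree n = Node (balanced_tree (n - n div 2)) (balanced_tree (n div 2))"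
  by (cases n rule: balanced_tree.cases) auto

declare balanced_tree.simps(3) [simp del]

lemma leaves_balanced_tree: "n \<ge> 1 \<Longrightarrow> leaves (balanced_tree n) = n"
  by (induction n rule: balanced_tree.induct) (auto simp: balanced_tree.simps)

lemma colless_balanced_tree: "colless (balanced_tree n) = balanced_colless n"
proof (induction n rule: less_induct)
  case (less n)
  show ?case
  proof (cases "n \<ge> 2")
    case True
    have "1 \<le> n div 2" "n div 2 \<le> n - n div 2" "n - n div 2 - n div 2 = n mod 2"
      using True div_mult_mod_eq[of n 2] by linarith+
    then show ?thesis
      using True less.IH[of "n div 2"] less.IH[of "n - n div 2"]
      by (simp add: balanced_tree_step balanced_colless_step leaves_balanced_tree)
  next
    case False
    then have "n = 0 \<or> n = 1" by auto
    then show ?thesis by auto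
  qed
qed

definition colless_split_ineq :: "nat \<Rightarrow> nat \<Rightarrow> bool" where
  "colless_split_ineq a b \<longleftrightarrow>
    int (balanced_colless (a + b))
      \<le> int (balanced_colless a) + int (balanced_colless b) + \<bar>int a - int b\<bar>"

lemma colless_split_ineq_commute: "colless_split_ineq a b \<Longrightarrow> colless_split_ineq b a"
  unfolding colless_split_ineq_def by (simp add: add.commute abs_minus_commute)

lemma colless_split_ineq_0: "colless_split_ineq a 0"
  by (simp add: colless_split_ineq_def)

lemma colless_split_ineq_same: "colless_split_ineq a a"
proof -
  have "a + a = 2 * a" by simp
  then show ?thesis unfolding colless_split_ineq_def by (simp only: balanced_colless_double)
qed

lemma colless_split_ineq_double:
  assumes "colless_split_ineq p q"
  shows "colless_split_ineq (2 * p) (2 * q)"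
proof -
  have "\<bar>2 * int p - 2 * int q\<bar> = 2 * \<bar>int p - int q\<bar>" by arith
  then show ?thesis
    using assms balanced_colless_double[of "p + q"]
    by (simp add: colless_split_ineq_def balanced_colless_double)
qed

lemma colless_split_ineq_Suc_double:
  assumes "p \<noteq> q" "colless_split_ineq p (Suc q)" "colless_split_ineq (Suc p) q"
  shows "colless_split_ineq (Suc (2 * p)) (Suc (2 * q))"
proof -
  have "\<bar>int p - int q - 1\<bar> + \<bar>int p - int q + 1\<bar> = 2 * \<bar>int p - int q\<bar>"
    using assms(1) by arith
  moreover have "Suc (2 * p) + Suc (2 * q) = 2 * Suc (p + q)" by simp
  ultimately show ?thesis
    using assms(2,3) balanced_colless_double[of "Suc (p + q)"]
      balanced_colless_Suc_double[of p] balanced_colless_Suc_double[of q]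
    unfolding colless_split_ineq_def by (simp split: if_splits; linarith)
qed

lemma colless_split_ineq_double_Suc_double:
  assumes "p \<ge> 1" "colless_split_ineq p q" "colless_split_ineq p (Suc q)"
  shows "colless_split_ineq (2 * p) (Suc (2 * q))"
proof -
  have halves: "int (balanced_colless (2 * p + Suc (2 * q)))
      = int (balanced_colless (p + q)) + int (balanced_colless (Suc (p + q))) + 1"
    using balanced_colless_Suc_double[of "p + q"] assms(1) by simp
  have upper: "int (balanced_colless (Suc (p + q)))
      \<le> int (balanced_colless p) + int (balanced_colless (Suc q)) + \<bar>int p - int q - 1\<bar>"
    using assms(3) by (simp add: colless_split_ineq_def)
  show ?thesis
  proof (cases "q = 0")
    case True
    have "\<bar>int p - 1\<bar> = int p - 1" "\<bar>2 * int p - 1\<bar> = 2 * int p - 1"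
      using assms(1) by simp_all
    then show ?thesis
      using halves upper True balanced_colless_double[of p] assms(1)
      by (simp add: colless_split_ineq_def)
  next
    case False
    have "\<bar>2 * int p - 2 * int q - 1\<bar> = \<bar>int p - int q\<bar> + \<bar>int p - int q - 1\<bar>"
      by arith
    then show ?thesis
      using halves upper False assms(2) balanced_colless_double[of p] balanced_colless_Suc_double[of q]
      by (simp add: colless_split_ineq_def)
  qed
qed

lemma colless_split_ineq_holds: "colless_split_ineq a b"
proof (induction "a + b" arbitrary: a b rule: less_induct)
  case less
  consider "a = 0 \<or> b = 0" | "a = b" | "even a" "even b" "a \<noteq> 0" | "odd a" "odd b" "a \<noteq> b"
    | "even a" "odd b" "a \<noteq> 0" | "odd a" "even b" "b \<noteq> 0"
    by blast
  then show ?case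
  proof cases
    case 1
    then show ?thesis using colless_split_ineq_0 colless_split_ineq_commute by blast
  next
    case 2
    then show ?thesis using colless_split_ineq_same by simp
  next
    case 3
    then obtain p q where "a = 2 * p" "b = 2 * q" "p \<noteq> 0" by (auto elim!: evenE)
    then show ?thesis using less colless_split_ineq_double by simp
  next
    case 4
    then obtain p q where "a = Suc (2 * p)" "b = Suc (2 * q)" "p \<noteq> q" by (auto elim!: oddE)
    then show ?thesis using less colless_split_ineq_Suc_double by simp
  next
    case 5
    then obtain p q where "a = 2 * p" "b = Suc (2 * q)" "p \<ge> 1" by (auto elim!: evenE oddE)
    then show ?thesis using less colless_split_ineq_double_Suc_double by simp
  next
    case 6
    then obtain p q where "b = 2 * p" "a = Suc (2 * q)" "p \<ge> 1" by (auto elim!: evenE oddE)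
    then show ?thesis
      using less colless_split_ineq_double_Suc_double colless_split_ineq_commute by simp
  qed
qed

lemma int_colless_Node:
  "int (colless (Node l r)) = int (colless l) + int (colless r) + \<bar>int (leaves l) - int (leaves r)\<bar>"
  by simp

lemma balanced_colless_le_colless: "balanced_colless (leaves t) \<le> colless t"
proof (induction t)
  case (Node l r)
  then show ?case
    using colless_split_ineq_holds[of "leaves l" "leaves r"] int_colless_Node[of l r]
    by (simp add: colless_split_ineq_def)
qed simp

lemma leaves_ge_1: "leaves t \<ge> 1"
  by (induction t) auto

lemma colless_le_square: "colless t \<le> leaves t ^ 2"
proof (induction t)
  case (Node l r)
  have "leaves l \<le> leaves l * leaves r" "leaves r \<le> leaves l * leaves r"
    using leaves_ge_1[of l] leaves_ge_1[of r] by simp_all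
  moreover have "colless (Node l r) \<le> colless l + colless r + leaves l + leaves r"
    by auto
  ultimately have "colless (Node l r) \<le> leaves l ^ 2 + leaves r ^ 2 + 2 * (leaves l * leaves r)"
    using Node.IH by linarith
  then show ?case by (simp add: power2_sum)
qed simp

lemma min_colless_eq_balanced_colless:
  assumes "n \<ge> 1"
  shows "min_colless n = balanced_colless n"
  unfolding min_colless_def
proof (rule Min_eqI)
  show "finite {colless t |t. leaves t = n}"
    by (rule finite_subset[of _ "{..n ^ 2}"]) (auto intro: colless_le_square)
  show "balanced_colless n \<le> y" if "y \<in> {colless t |t. leaves t = n}" for y
    using that balanced_colless_le_colless by auto
  show "balanced_colless n \<in> {colless t |t. leaves t = n}"
    using leaves_balanced_tree[OF assms] colless_balanced_tree[of n, symmetric] by blast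
qed

lemma balanced_colless_power_Suc_add:
  "r \<le> 2 ^ m \<Longrightarrow> balanced_colless (2 ^ Suc m + r) = balanced_colless (2 ^ m + r) + r"
proof (induction m arbitrary: r)
  case 0
  then consider "r = 0" | "r = 1" by fastforce
  then show ?case by cases (simp_all add: balanced_colless_step)
next
  case (Suc m)
  show ?case
  proof (cases "even r")
    case True
    then obtain r' where r: "r = 2 * r'" by (auto elim!: evenE)
    have "balanced_colless (2 ^ Suc (Suc m) + r) = 2 * balanced_colless (2 ^ Suc m + r')"
      using r balanced_colless_double[of "2 ^ Suc m + r'"] by simp
    also have "\<dots> = 2 * balanced_colless (2 ^ m + r') + r"
      using Suc r by simp
    also have "\<dots> = balanced_colless (2 ^ Suc m + r) + r"
      using r balanced_colless_double[of "2 ^ m + r'"] by simp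
    finally show ?thesis .
  next
    case False
    then obtain r' where r: "r = Suc (2 * r')" by (auto elim!: oddE)
    have "balanced_colless (2 ^ Suc (Suc m) + r)
        = balanced_colless (2 ^ Suc m + r') + balanced_colless (2 ^ Suc m + Suc r') + 1"
      using r balanced_colless_Suc_double[of "2 ^ Suc m + r'"] by simp
    also have "\<dots> = balanced_colless (2 ^ m + r') + balanced_colless (2 ^ m + Suc r') + 1 + r"
    proof -
      have "Suc r' \<le> 2 ^ m" using Suc.prems r by simp
      then show ?thesis using Suc.IH[of r'] Suc.IH[of "Suc r'"] r by simp
    qed
    also have "\<dots> = balanced_colless (2 ^ Suc m + r) + r"
      using r balanced_colless_Suc_double[of "2 ^ m + r'"] by simp
    finally show ?thesis .
  qed
qed

lemma balanced_colless_adjacent_power_add: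
  "2 ^ t \<le> r \<Longrightarrow> r \<le> 2 ^ Suc t \<Longrightarrow>
    balanced_colless (2 ^ Suc t + r) + r = balanced_colless r + 2 ^ Suc t"
proof (induction t arbitrary: r)
  case 0
  then consider "r = 1" | "r = 2" by fastforce
  then show ?case by cases (simp_all add: balanced_colless_step)
next
  case (Suc t)
  show ?case
  proof (cases "even r")
    case True
    then obtain r' where r: "r = 2 * r'" by (auto elim!: evenE)
    have "2 ^ t \<le> r'" "r' \<le> 2 ^ Suc t" using Suc.prems r by simp_all
    then have "balanced_colless (2 ^ Suc t + r') + r' = balanced_colless r' + 2 ^ Suc t"
      by (rule Suc.IH)
    moreover have "balanced_colless (2 ^ Suc (Suc t) + r) = 2 * balanced_colless (2 ^ Suc t + r')"
      using r balanced_colless_double[of "2 ^ Suc t + r'"] by simp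
    ultimately show ?thesis
      using r balanced_colless_double[of r'] by simp
  next
    case False
    then obtain r' where r: "r = Suc (2 * r')" by (auto elim!: oddE)
    have "2 ^ t \<le> r'" "Suc r' \<le> 2 ^ Suc t" using Suc.prems r by simp_all
    then have "balanced_colless (2 ^ Suc t + r') + r' = balanced_colless r' + 2 ^ Suc t"
      and "balanced_colless (2 ^ Suc t + Suc r') + Suc r' = balanced_colless (Suc r') + 2 ^ Suc t"
      using Suc.IH[of r'] Suc.IH[of "Suc r'"] by simp_all
    moreover have "balanced_colless (2 ^ Suc (Suc t) + r)
        = balanced_colless (2 ^ Suc t + r') + balanced_colless (2 ^ Suc t + Suc r') + 1"
      using r balanced_colless_Suc_double[of "2 ^ Suc t + r'"] by simp
    moreover have "r' \<noteq> 0" using \<open>2 ^ t \<le> r'\<close> order_less_le_trans[of 0 "2 ^ t" r'] by simp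
    ultimately show ?thesis
      using r balanced_colless_Suc_double[of r'] by simp
  qed
qed

lemma balanced_colless_power_add_iterate:
  "r \<le> 2 ^ k \<Longrightarrow> balanced_colless (2 ^ (k + d) + r) = balanced_colless (2 ^ k + r) + d * r"
proof (induction d)
  case (Suc d)
  have "(2::nat) ^ k \<le> 2 ^ (k + d)" by (rule power_increasing) simp_all
  then have "r \<le> 2 ^ (k + d)" using Suc.prems by linarith
  then show ?case
    using Suc balanced_colless_power_Suc_add[of r "k + d"] by simp
qed simp

lemma balanced_colless_power_add:
  assumes "t < m" "2 ^ t \<le> r" "r \<le> 2 ^ Suc t"
  shows "int (balanced_colless (2 ^ m + r))
    = int (balanced_colless r) + (int m - int t - 2) * int r + 2 ^ Suc t"
proof -
  obtain d where m: "m = Suc t + d" using assms(1) less_iff_Suc_add by blast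
  have "balanced_colless (2 ^ m + r) = balanced_colless (2 ^ Suc t + r) + d * r"
    unfolding m by (rule balanced_colless_power_add_iterate[OF assms(3)])
  moreover have "balanced_colless (2 ^ Suc t + r) + r = balanced_colless r + 2 ^ Suc t"
    using balanced_colless_adjacent_power_add assms(2,3) by blast
  then have "int (balanced_colless (2 ^ Suc t + r)) + int r = int (balanced_colless r) + 2 ^ Suc t"
    by (metis of_nat_add of_nat_numeral of_nat_power)
  ultimately show ?thesis
    unfolding m by (simp add: algebra_simps)
qed

lemma sum_list_powers_two_less:
  "sorted_wrt (>) ks \<Longrightarrow> \<forall>k\<in>set ks. k < a \<Longrightarrow> (\<Sum>k\<leftarrow>ks. 2 ^ k) < (2::nat) ^ a"
proof (induction ks arbitrary: a)
  case (Cons k ks)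
  then have "(\<Sum>k\<leftarrow>ks. 2 ^ k) < (2::nat) ^ k" "k < a" by simp_all
  then have "(\<Sum>k\<leftarrow>k # ks. 2 ^ k) < (2::nat) ^ Suc k" by simp
  also have "\<dots> \<le> 2 ^ a" using \<open>k < a\<close> by (intro power_increasing) simp_all
  finally show ?case .
qed simp

text \<open>The right-hand side of the theorem with m = m_1 and ks = [m_2, ..., m_l];
  the index i corresponds to j - 2.\<close>

definition colless_formula :: "int \<Rightarrow> nat list \<Rightarrow> int" where
  "colless_formula m ks = (\<Sum>i<length ks. 2 ^ (ks ! i) * (m - int (ks ! i) - 2 * int i))"

lemma colless_formula_Nil [simp]: "colless_formula m [] = 0"
  by (simp add: colless_formula_def)

lemma colless_formula_Cons:
  "colless_formula m (k # ks) = 2 ^ k * (m - int k) + colless_formula (m - 2) ks"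
  unfolding colless_formula_def
  by (simp only: length_Cons sum.lessThan_Suc_shift) (simp add: algebra_simps)

lemma colless_formula_add:
  "colless_formula (m + d) ks = colless_formula m ks + d * int (\<Sum>k\<leftarrow>ks. 2 ^ k)"
proof (induction ks arbitrary: m)
  case (Cons k ks)
  have "colless_formula (m - 2 + d) ks = colless_formula (m - 2) ks + d * int (\<Sum>k\<leftarrow>ks. 2 ^ k)"
    by (rule Cons.IH)
  then show ?case by (simp add: colless_formula_Cons algebra_simps)
qed simp

lemma balanced_colless_sum_powers_two:
  "sorted_wrt (>) (m # ks) \<Longrightarrow> int (balanced_colless (\<Sum>k\<leftarrow>m # ks. 2 ^ k)) = colless_formula (int m) ks"
proof (induction ks arbitrary: m)
  case (Cons a ks)
  define r where "r = (\<Sum>k\<leftarrow>a # ks. 2 ^ k :: nat)"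
  have "a < m" "sorted_wrt (>) (a # ks)" using Cons.prems by simp_all
  have "(\<Sum>k\<leftarrow>ks. 2 ^ k) < (2::nat) ^ a"
    using sum_list_powers_two_less \<open>sorted_wrt (>) (a # ks)\<close> by simp
  then have "2 ^ a \<le> r" "r \<le> 2 ^ Suc a" unfolding r_def by simp_all
  then have "int (balanced_colless (2 ^ m + r))
      = int (balanced_colless r) + (int m - int a - 2) * int r + 2 ^ Suc a"
    using balanced_colless_power_add \<open>a < m\<close> by blast
  also have "\<dots> = colless_formula (int m) (a # ks)"
    using Cons.IH[OF \<open>sorted_wrt (>) (a # ks)\<close>] colless_formula_add[of "int a" "int m - int a - 2" ks]
    unfolding r_def by (simp add: colless_formula_Cons algebra_simps)
  finally show ?case unfolding r_def by simp
qed simp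

theorem theorem2:
  fixes n :: nat and ms :: "nat list"
  assumes "n \<ge> 1"
    and "ms \<noteq> []"
    and "sorted_wrt (>) ms"
    and "n = (\<Sum>j<length ms. 2 ^ (ms ! j))"
  shows "int (min_colless n) =
    (\<Sum>j\<in>{2..length ms}. 2 ^ (ms ! (j - 1)) *
        (int (ms ! 0) - int (ms ! (j - 1)) - 2 * (int j - 2)))"
proof -
  obtain m ks where ms: "ms = m # ks" using assms(2) by (cases ms) auto
  have "n = (\<Sum>k\<leftarrow>ms. 2 ^ k)"
    using assms(4) by (simp add: sum_list_sum_nth atLeast0LessThan)
  then have "int (min_colless n) = colless_formula (int m) ks"
    using min_colless_eq_balanced_colless[OF assms(1)] balanced_colless_sum_powers_two assms(3) ms
    by simp
  also have "\<dots> = (\<Sum>i<length ks. 2 ^ (ms ! Suc i) * (int (ms ! 0) - int (ms ! Suc i) - 2 * int i))"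
    by (simp add: colless_formula_def ms)
  also have "\<dots> = (\<Sum>j\<in>{2..length ms}. 2 ^ (ms ! (j - 1)) *
        (int (ms ! 0) - int (ms ! (j - 1)) - 2 * (int j - 2)))"
    by (rule sum.reindex_bij_witness[of _ "\<lambda>j. j - 2" "\<lambda>i. i + 2"]) (auto simp: ms)
  finally show ?thesis .
qed

end
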